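(* Let $n\ge 1$ and let $L_1,L_2,\underline b>0$ be constants. Let $\mathcal{F}_{L_1,L_2,\underline b}$ be the set of all $f\in C^1(\mathbb{R}^{3n},\mathbb{R}^n)$, $f=f(x_1,x_2,u)$ with $x_1,x_2,u\in\mathbb{R}^n$, such that for all $x_1,x_2,u\in\mathbb{R}^n$: $\left\|\frac{\partial f}{\partial x_1}\right\|\le L_1$, $\left\|\frac{\partial f}{\partial x_2}\right\|\le L_2$, and $\mathrm{Sym}\left[\frac{\partial f}{\partial u}\right]\ge \underline b I_n$. Let $$\Omega_{pid}=\left\{(k_p,k_i,k_d)\in(0,\infty)^3 \;:\; k_p^2>2k_ik_d+\bar k,\ \ k_d^2>k_p/\underline b+\bar k\right\},\qquad \bar k=(L_1+L_2)(k_p+k_d)/\underline b .$$ Consider the closed-loop system $$\dot x_1=x_2,\quad \dot x_2=f(x_1,x_2,u),\quad u(t)=k_pe(t)+k_i\int_0^t e(s)\,ds+k_d\dot e(t),\quad e(t)=y^*-x_1(t),$$ with setpoint $y^*\in\mathbb{R}^n$. Then for any $(k_p,k_i,k_d)\in\Omega_{pid}$ there exist constants $M>0$ and $\lambda>0$, depending only on $(k_p,k_i,k_d,L_1,L_2,\underline b)$, such that for every $f\in\mathcal{F}_{L_1,L_2,\underline b}$, every $y^*\in\mathbb{R}^n$ and every initial state $(x_1(0),x_2(0))\in\mathbb{R}^{2n}$, the algebraic equation $f(y^*,0,u)=0$ has a unique solution $u^*\in\mathbb{R}^n$ and the solution of the closed-loop system satisfies $$\|e(t)\|+\|\dot e(t)\|\le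 Me^{-\lambda t}\left(\|e(0)\|+\|\dot e(0)\|+\|u^*\|\right)\quad\text{for all } t\ge 0.$$
   Context: $\|\cdot\|$ denotes the Euclidean norm of vectors and the induced operator norm of matrices. For a square matrix $P$, $\mathrm{Sym}[P]=(P+P^{\mathsf T})/2$. For symmetric matrices $S_1,S_2$, $S_1\ge S_2$ means $S_1-S_2$ is positive semidefinite. $\frac{\partial f}{\partial x_1},\frac{\partial f}{\partial x_2},\frac{\partial f}{\partial u}$ are the $n\times n$ Jacobian matrices of $f$ with respect to $x_1,x_2,u$. $I_n$ is the $n\times n$ identity matrix. *)

theory Defs
  imports "HOL-Analysis.Analysis"
begin

definition Sym :: "real^'n^'n \<Rightarrow> real^'n^'n" where
  "Sym P = (1/2) *\<^sub>R (P + transpose P)"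

definition psd :: "real^'n^'n \<Rightarrow> bool" where
  "psd S \<longleftrightarrow> (\<forall>v. 0 \<le> v \<bullet> (S *v v))"

definition mat_ge :: "real^'n^'n \<Rightarrow> real^'n^'n \<Rightarrow> bool" where
  "mat_ge S1 S2 \<longleftrightarrow> psd (S1 - S2)"

definition opnorm :: "real^'n^'m \<Rightarrow> real" where
  "opnorm A = onorm (\<lambda>h. A *v h)"

text \<open>The class F_{L1,L2,b}: C^1 maps f(x1,x2,u) whose partial Jacobians
  J1 = df/dx1, J2 = df/dx2, J3 = df/du (the blocks of the total derivative,
  which are continuous) satisfy the bounds.\<close>
definition F_class :: "real \<Rightarrow> real \<Rightarrow> real \<Rightarrow>
    (real^'n \<Rightarrow> real^'n \<Rightarrow> real^'n \<Rightarrow> real^'n) set" where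
  "F_class L1 L2 b = {f. \<exists>J1 J2 J3 :: real^'n \<Rightarrow> real^'n \<Rightarrow> real^'n \<Rightarrow> real^'n^'n.
      (\<forall>x1 x2 u. ((\<lambda>(a, c, d). f a c d) has_derivative
          (\<lambda>(h1, h2, h3). J1 x1 x2 u *v h1 + J2 x1 x2 u *v h2 + J3 x1 x2 u *v h3))
          (at (x1, x2, u))) \<and>
      continuous_on UNIV (\<lambda>(a, c, d). J1 a c d) \<and>
      continuous_on UNIV (\<lambda>(a, c, d). J2 a c d) \<and>
      continuous_on UNIV (\<lambda>(a, c, d). J3 a c d) \<and>
      (\<forall>x1 x2 u. opnorm (J1 x1 x2 u) \<le> L1 \<and> opnorm (J2 x1 x2 u) \<le> L2 \<and>
                  mat_ge (Sym (J3 x1 x2 u)) (b *\<^sub>R mat 1))}"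

definition Omega_pid :: "real \<Rightarrow> real \<Rightarrow> real \<Rightarrow> (real \<times> real \<times> real) set" where
  "Omega_pid L1 L2 b = {(kp, ki, kd). 0 < kp \<and> 0 < ki \<and> 0 < kd \<and>
      (let kbar = (L1 + L2) * (kp + kd) / b in
        kp^2 > 2 * ki * kd + kbar \<and> kd^2 > kp / b + kbar)}"

text \<open>PID control input u(t) = kp e(t) + ki \<integral>_0^t e + kd e'(t), with
  e = y* - x1 and e' = -x1' = -x2.\<close>
definition pid_input :: "real \<Rightarrow> real \<Rightarrow> real \<Rightarrow> real^'n \<Rightarrow>
    (real \<Rightarrow> real^'n) \<Rightarrow> (real \<Rightarrow> real^'n) \<Rightarrow> real \<Rightarrow> real^'n" where
  "pid_input kp ki kd y x1 x2 t =
     kp *\<^sub>R (y - x1 t) + ki *\<^sub>R integral {0..t} (\<lambda>s. y - x1 s) + kd *\<^sub>R (- x2 t)"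

definition closed_loop_solution :: "(real^'n \<Rightarrow> real^'n \<Rightarrow> real^'n \<Rightarrow> real^'n) \<Rightarrow>
    real \<Rightarrow> real \<Rightarrow> real \<Rightarrow> real^'n \<Rightarrow> real \<Rightarrow>
    (real \<Rightarrow> real^'n) \<Rightarrow> (real \<Rightarrow> real^'n) \<Rightarrow> bool" where
  "closed_loop_solution f kp ki kd y T x1 x2 \<longleftrightarrow>
     (\<forall>t\<in>{0..<T}.
        (x1 has_vector_derivative x2 t) (at t within {0..<T}) \<and>
        (x2 has_vector_derivative f (x1 t) (x2 t) (pid_input kp ki kd y x1 x2 t))
           (at t within {0..<T}))"

end

theory Submission
  imports Defs
begin

(* Write e = y - x1, v = e' = -x2 and r = u - ustar, where ustar is the zero of the strongly
   monotone map f(y, 0, .), which exists by Brouwer's fixed point theorem. Along the closed loop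
   e' = v, v' = -w and r' = kp v + ki e - kd w with w = f(x1, x2, u), and w = k + h with
   k = f(x1, x2, u) - f(x1, x2, ustar) and h = f(x1, x2, ustar) - f(y, 0, ustar): strong
   monotonicity gives r . k >= b |r|^2 and the Lipschitz bounds give |h| <= L1 |e| + L2 |v|.
   For V = |r|^2/2 + (p1 |e|^2 - 2 q e . s + p3 |s|^2)/2 with s = r - kd v and suitable weights,
   completing the square in r shows dV/dt <= -gamma V exactly under the two inequalities
   defining Omega_pid. Since V is comparable to |e|^2 + |v|^2 + |r|^2 and
   r(0) = kp e(0) + kd v(0) - ustar, the exponential decay of V yields the estimate. *)

section \<open>Strongly monotone maps\<close>

definition strongly_monotone :: "real \<Rightarrow> ('a::real_inner \<Rightarrow> 'a) \<Rightarrow> bool" where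
  "strongly_monotone b g \<longleftrightarrow> (\<forall>u u'. b * (norm (u - u'))\<^sup>2 \<le> (u - u') \<bullet> (g u - g u'))"

lemma strongly_monotone_zero_unique:
  assumes "strongly_monotone b g" "0 < b" "g u = 0" "g u' = 0"
  shows "u = u'"
proof -
  have "b * (norm (u - u'))\<^sup>2 \<le> (u - u') \<bullet> (g u - g u')"
    using assms(1) unfolding strongly_monotone_def by blast
  also have "\<dots> = 0" using assms(3,4) by simp
  finally show ?thesis using \<open>0 < b\<close> by (simp add: mult_le_0_iff)
qed

text \<open>If g had no zero, u \<mapsto> -R g u / |g u| would map the ball of radius R = |g 0| / b
  onto its boundary sphere; at a Brouwer fixed point u we would get
  u \<bullet> g u < 0, whereas strong monotonicity gives u \<bullet> g u \<ge> b R^2 - R |g 0| = 0.\<close>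
lemma strongly_monotone_has_zero:
  fixes g :: "'a::euclidean_space \<Rightarrow> 'a"
  assumes mono: "strongly_monotone b g" and "0 < b" and cont: "continuous_on UNIV g"
  shows "\<exists>u. g u = 0"
proof (rule ccontr)
  assume "\<nexists>u. g u = 0"
  then have g_pos: "0 < norm (g u)" for u by auto
  define R where "R = norm (g 0) / b"
  have "0 < R" unfolding R_def using g_pos \<open>0 < b\<close> by simp
  define \<phi> where "\<phi> u = (- R / norm (g u)) *\<^sub>R g u" for u
  have norm_\<phi>: "norm (\<phi> u) = R" for u
    unfolding \<phi>_def using g_pos[of u] \<open>0 < R\<close> by simp
  have "continuous_on (cball 0 R) \<phi>"
    unfolding \<phi>_def using g_pos by (intro continuous_intros continuous_on_subset[OF cont]) auto
  moreover have "\<phi> \<in> cball 0 R \<rightarrow> cball 0 R"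
    using norm_\<phi> by auto
  moreover have "cball 0 R \<noteq> {}"
    using \<open>0 < R\<close> by simp
  ultimately obtain u where "\<phi> u = u"
    using brouwer[OF compact_cball convex_cball] by blast
  then have norm_u: "norm u = R"
    using norm_\<phi>[of u] by simp
  have "u \<bullet> g u = (- R / norm (g u)) * (g u \<bullet> g u)"
    using \<open>\<phi> u = u\<close> unfolding \<phi>_def by (metis inner_scaleR_left)
  also have "\<dots> = - R * norm (g u)"
    using g_pos[of u] by (simp add: dot_square_norm power2_eq_square)
  finally have "u \<bullet> g u = - R * norm (g u)" .
  moreover have "b * R\<^sup>2 \<le> u \<bullet> g u - u \<bullet> g 0"
    using mono norm_u unfolding strongly_monotone_def by (metis diff_zero inner_diff_right)
  moreover have "- (u \<bullet> g 0) \<le> R * norm (g 0)"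
    using Cauchy_Schwarz_ineq2[of u "g 0"] norm_u by (simp add: abs_le_iff)
  moreover have "R * norm (g 0) = b * R\<^sup>2"
    unfolding R_def using \<open>0 < b\<close> by (simp add: power2_eq_square)
  ultimately have "0 \<le> - R * norm (g u)" by linarith
  with \<open>0 < R\<close> g_pos[of u] show False by (simp add: mult_le_0_iff)
qed

lemma strongly_monotone_if_has_derivative:
  fixes g :: "'a::real_inner \<Rightarrow> 'a"
  assumes deriv: "\<And>u. (g has_derivative g' u) (at u)"
    and coercive: "\<And>u h. b * (h \<bullet> h) \<le> h \<bullet> g' u h"
  shows "strongly_monotone b g"
  unfolding strongly_monotone_def
proof (intro allI)
  fix u u' :: 'a
  define d where "d = u - u'"
  define \<phi> where "\<phi> t = d \<bullet> g (u' + t *\<^sub>R d)" for t :: real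
  have "(\<phi> has_derivative (\<lambda>t. d \<bullet> g' (u' + s *\<^sub>R d) (t *\<^sub>R d))) (at s within {0..1})" for s
    unfolding \<phi>_def
    by (rule has_derivative_inner_right, rule has_derivative_compose[OF _ deriv])
       (auto intro!: derivative_eq_intros)
  then obtain s where "\<phi> 1 - \<phi> 0 = d \<bullet> g' (u' + s *\<^sub>R d) ((1 - 0) *\<^sub>R d)"
    using mvt_simple[of 0 1 \<phi>] by force
  moreover have "\<phi> 1 - \<phi> 0 = d \<bullet> (g u - g u')"
    unfolding \<phi>_def d_def by (simp add: inner_diff_right)
  ultimately show "b * (norm (u - u'))\<^sup>2 \<le> (u - u') \<bullet> (g u - g u')"
    using coercive[where u="u' + s *\<^sub>R d" and h=d] unfolding d_def by (simp add: dot_square_norm)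
qed

section \<open>The class of plants\<close>

lemma mat_ge_Sym_imp_inner_ge:
  fixes J :: "real^'n^'n"
  assumes "mat_ge (Sym J) (b *\<^sub>R mat 1)"
  shows "b * (v \<bullet> v) \<le> v \<bullet> (J *v v)"
proof -
  have "v \<bullet> (transpose J *v v) = v \<bullet> (J *v v)"
    by (simp add: inner_commute[of v "v v* J"] dot_lmul_matrix)
  moreover have "(Sym J - b *\<^sub>R mat 1) *v v
      = (1/2) *\<^sub>R (J *v v) + (1/2) *\<^sub>R (transpose J *v v) - b *\<^sub>R v"
    unfolding Sym_def
    by (simp add: matrix_vector_mult_diff_rdistrib matrix_vector_mult_add_rdistrib
        scaleR_matrix_vector_assoc[symmetric] scaleR_add_right)
  moreover have "0 \<le> v \<bullet> ((Sym J - b *\<^sub>R mat 1) *v v)"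
    using assms unfolding mat_ge_def psd_def by blast
  ultimately show ?thesis by (simp add: inner_diff_right inner_add_right)
qed

lemma opnorm_nonneg: "0 \<le> opnorm (A :: real^'n^'m)"
  unfolding opnorm_def by (intro onorm_pos_le matrix_vector_mul_bounded_linear)

lemma F_class_partial_derivatives:
  fixes f :: "real^'n \<Rightarrow> real^'n \<Rightarrow> real^'n \<Rightarrow> real^'n"
  assumes "f \<in> F_class L1 L2 b"
  obtains J1 J2 J3 :: "real^'n \<Rightarrow> real^'n \<Rightarrow> real^'n \<Rightarrow> real^'n^'n" where
    "\<And>x1 x2 u. ((\<lambda>a. f a x2 u) has_derivative (\<lambda>h. J1 x1 x2 u *v h)) (at x1)"
    "\<And>x1 x2 u. ((\<lambda>c. f x1 c u) has_derivative (\<lambda>h. J2 x1 x2 u *v h)) (at x2)"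
    "\<And>x1 x2 u. (f x1 x2 has_derivative (\<lambda>h. J3 x1 x2 u *v h)) (at u)"
    "\<And>x1 x2 u. opnorm (J1 x1 x2 u) \<le> L1"
    "\<And>x1 x2 u. opnorm (J2 x1 x2 u) \<le> L2"
    "\<And>x1 x2 u. mat_ge (Sym (J3 x1 x2 u)) (b *\<^sub>R mat 1)"
proof -
  obtain J1 J2 J3 :: "real^'n \<Rightarrow> real^'n \<Rightarrow> real^'n \<Rightarrow> real^'n^'n" where
    total: "\<And>x1 x2 u. ((\<lambda>(a, c, d). f a c d) has_derivative
          (\<lambda>(h1, h2, h3). J1 x1 x2 u *v h1 + J2 x1 x2 u *v h2 + J3 x1 x2 u *v h3)) (at (x1, x2, u))"
    and bounds: "\<And>x1 x2 u. opnorm (J1 x1 x2 u) \<le> L1 \<and> opnorm (J2 x1 x2 u) \<le> L2 \<and>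
          mat_ge (Sym (J3 x1 x2 u)) (b *\<^sub>R mat 1)"
    using assms unfolding F_class_def by blast
  define F where "F = (\<lambda>(a, c, d). f a c d)"
  define DF where "DF = (\<lambda>(x1, x2, u) (h1, h2, h3).
    J1 x1 x2 u *v h1 + J2 x1 x2 u *v h2 + J3 x1 x2 u *v h3)"
  have "(F has_derivative DF p) (at p)" for p
    using total unfolding F_def DF_def by (cases p) auto
  then have partial: "((\<lambda>x. F (\<iota> x)) has_derivative (\<lambda>h. DF (\<iota> x) (\<iota>' h))) (at x)"
    if "(\<iota> has_derivative \<iota>') (at x)" for \<iota> \<iota>' and x :: "real^'n"
    using has_derivative_compose[OF that] by blast
  show ?thesis
  proof
    fix x1 x2 u :: "real^'n"
    have "((\<lambda>a. (a, x2, u)) has_derivative (\<lambda>h. (h, 0, 0 :: real^'n))) (at x1)"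
      by (auto intro!: derivative_eq_intros simp: zero_prod_def)
    from partial[OF this]
    show "((\<lambda>a. f a x2 u) has_derivative (\<lambda>h. J1 x1 x2 u *v h)) (at x1)"
      by (simp add: F_def DF_def)
    have "((\<lambda>c. (x1, c, u)) has_derivative (\<lambda>h. (0, h, 0 :: real^'n))) (at x2)"
      by (auto intro!: derivative_eq_intros simp: zero_prod_def)
    from partial[OF this]
    show "((\<lambda>c. f x1 c u) has_derivative (\<lambda>h. J2 x1 x2 u *v h)) (at x2)"
      by (simp add: F_def DF_def)
    have "((\<lambda>d. (x1, x2, d)) has_derivative (\<lambda>h. (0 :: real^'n, 0, h))) (at u)"
      by (auto intro!: derivative_eq_intros)
    from partial[OF this]
    show "(f x1 x2 has_derivative (\<lambda>h. J3 x1 x2 u *v h)) (at u)"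
      by (simp add: F_def DF_def)
  qed (use bounds in auto)
qed

lemma F_class_strongly_monotone:
  fixes f :: "real^'n \<Rightarrow> real^'n \<Rightarrow> real^'n \<Rightarrow> real^'n"
  assumes "f \<in> F_class L1 L2 b"
  shows "strongly_monotone b (f x1 x2)"
proof -
  obtain J3 :: "real^'n \<Rightarrow> real^'n \<Rightarrow> real^'n \<Rightarrow> real^'n^'n" where
    deriv: "\<And>u. (f x1 x2 has_derivative (\<lambda>h. J3 x1 x2 u *v h)) (at u)"
    and coercive: "\<And>u. mat_ge (Sym (J3 x1 x2 u)) (b *\<^sub>R mat 1)"
    using F_class_partial_derivatives[OF assms] by metis
  show ?thesis
    by (rule strongly_monotone_if_has_derivative[OF deriv mat_ge_Sym_imp_inner_ge[OF coercive]])
qed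

lemma F_class_continuous_on:
  fixes f :: "real^'n \<Rightarrow> real^'n \<Rightarrow> real^'n \<Rightarrow> real^'n"
  assumes "f \<in> F_class L1 L2 b"
  shows "continuous_on UNIV (f x1 x2)"
proof -
  obtain J3 :: "real^'n \<Rightarrow> real^'n \<Rightarrow> real^'n \<Rightarrow> real^'n^'n" where
    "\<And>u. (f x1 x2 has_derivative (\<lambda>h. J3 x1 x2 u *v h)) (at u)"
    using F_class_partial_derivatives[OF assms] by metis
  then have "isCont (f x1 x2) u" for u
    by (rule has_derivative_continuous)
  then show ?thesis
    by (simp add: continuous_at_imp_continuous_on)
qed

lemma F_class_lipschitz_x1:
  fixes f :: "real^'n \<Rightarrow> real^'n \<Rightarrow> real^'n \<Rightarrow> real^'n"
  assumes "f \<in> F_class L1 L2 b"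
  shows "L1-lipschitz_on UNIV (\<lambda>a. f a x2 u)"
proof -
  obtain J1 :: "real^'n \<Rightarrow> real^'n \<Rightarrow> real^'n \<Rightarrow> real^'n^'n" where
    deriv: "\<And>a. ((\<lambda>a. f a x2 u) has_derivative (\<lambda>h. J1 a x2 u *v h)) (at a)"
    and bound: "\<And>a. opnorm (J1 a x2 u) \<le> L1"
    using F_class_partial_derivatives[OF assms] by metis
  show ?thesis
  proof (rule lipschitz_onI)
    show "0 \<le> L1"
      using opnorm_nonneg bound order_trans by blast
    fix a a' :: "real^'n"
    have "norm (f a x2 u - f a' x2 u) \<le> L1 * norm (a - a')"
      by (rule differentiable_bound[of UNIV _ "\<lambda>a h. J1 a x2 u *v h"])
        (use deriv bound in \<open>auto intro: has_derivative_at_withinI simp: opnorm_def\<close>)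
    then show "dist (f a x2 u) (f a' x2 u) \<le> L1 * dist a a'"
      by (simp add: dist_norm)
  qed
qed

lemma F_class_lipschitz_x2:
  fixes f :: "real^'n \<Rightarrow> real^'n \<Rightarrow> real^'n \<Rightarrow> real^'n"
  assumes "f \<in> F_class L1 L2 b"
  shows "L2-lipschitz_on UNIV (\<lambda>c. f x1 c u)"
proof -
  obtain J2 :: "real^'n \<Rightarrow> real^'n \<Rightarrow> real^'n \<Rightarrow> real^'n^'n" where
    deriv: "\<And>c. ((\<lambda>c. f x1 c u) has_derivative (\<lambda>h. J2 x1 c u *v h)) (at c)"
    and bound: "\<And>c. opnorm (J2 x1 c u) \<le> L2"
    using F_class_partial_derivatives[OF assms] by metis
  show ?thesis
  proof (rule lipschitz_onI)
    show "0 \<le> L2"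
      using opnorm_nonneg bound order_trans by blast
    fix c c' :: "real^'n"
    have "norm (f x1 c u - f x1 c' u) \<le> L2 * norm (c - c')"
      by (rule differentiable_bound[of UNIV _ "\<lambda>c h. J2 x1 c u *v h"])
        (use deriv bound in \<open>auto intro: has_derivative_at_withinI simp: opnorm_def\<close>)
    then show "dist (f x1 c u) (f x1 c' u) \<le> L2 * dist c c'"
      by (simp add: dist_norm)
  qed
qed

definition monotone_lipschitz :: "real \<Rightarrow> real \<Rightarrow> real \<Rightarrow> ('a::real_inner \<Rightarrow> 'a \<Rightarrow> 'a \<Rightarrow> 'a) \<Rightarrow> bool" where
  "monotone_lipschitz b L1 L2 f \<longleftrightarrow> (\<forall>x1 x2. strongly_monotone b (f x1 x2)) \<and>
     (\<forall>x2 u. L1-lipschitz_on UNIV (\<lambda>x1. f x1 x2 u)) \<and> (\<forall>x1 u. L2-lipschitz_on UNIV (\<lambda>x2. f x1 x2 u))"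

lemma F_class_monotone_lipschitz:
  fixes f :: "real^'n \<Rightarrow> real^'n \<Rightarrow> real^'n \<Rightarrow> real^'n"
  assumes "f \<in> F_class L1 L2 b"
  shows "monotone_lipschitz b L1 L2 f"
  unfolding monotone_lipschitz_def
  using F_class_strongly_monotone F_class_lipschitz_x1 F_class_lipschitz_x2 assms by blast

lemma F_class_unique_zero:
  fixes f :: "real^'n \<Rightarrow> real^'n \<Rightarrow> real^'n \<Rightarrow> real^'n"
  assumes "f \<in> F_class L1 L2 b" and "0 < b"
  shows "\<exists>u. f x1 x2 u = 0 \<and> (\<forall>v. f x1 x2 v = 0 \<longrightarrow> v = u)"
  using strongly_monotone_has_zero[OF F_class_strongly_monotone[OF assms(1)] assms(2)
      F_class_continuous_on[OF assms(1)]]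
    strongly_monotone_zero_unique[OF F_class_strongly_monotone[OF assms(1)] assms(2)]
  by blast

lemma square_sum_le: "(x + y)\<^sup>2 \<le> 2 * (x\<^sup>2 + y\<^sup>2)"
  for x y :: "'a::linordered_field"
  using sum_squares_bound[of x y] by (simp add: power2_sum)

lemma norm_diff_square_le: "(norm (a - b))\<^sup>2 \<le> 2 * ((norm a)\<^sup>2 + (norm b)\<^sup>2)"
proof -
  have "(norm (a - b))\<^sup>2 \<le> (norm a + norm b)\<^sup>2"
    using norm_triangle_ineq4[of a b] by (simp add: power_mono)
  also have "\<dots> \<le> 2 * ((norm a)\<^sup>2 + (norm b)\<^sup>2)"
    by (rule square_sum_le)
  finally show ?thesis .
qed

text \<open>The constant is det/tr of the matrix [[p1, -q], [-q, p3]], a lower bound for its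
  smallest eigenvalue.\<close>
lemma inner_quadratic_form_ge:
  fixes e s :: "'a::real_inner"
  assumes "0 < p1" "0 < p3" "q\<^sup>2 < p1 * p3"
  shows "(p1 * p3 - q\<^sup>2) / (p1 + p3) * ((norm e)\<^sup>2 + (norm s)\<^sup>2)
    \<le> p1 * (e \<bullet> e) - 2 * q * (e \<bullet> s) + p3 * (s \<bullet> s)"
proof -
  define \<epsilon> where "\<epsilon> = (p1 * p3 - q\<^sup>2) / (p1 + p3)"
  define E S where "E = norm e" and "S = norm s"
  have "\<epsilon> < p1"
    using assms unfolding \<epsilon>_def by (simp add: divide_less_eq algebra_simps add_pos_nonneg)
  have "p1 * p3 = \<epsilon> * (p1 + p3) + q\<^sup>2"
    using assms unfolding \<epsilon>_def by simp
  then have "(p1 - \<epsilon>) * (p3 - \<epsilon>) - \<bar>q\<bar>\<^sup>2 = \<epsilon>\<^sup>2"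
    by (simp add: algebra_simps power2_eq_square)
  moreover have "(p1 - \<epsilon>) * (p1 * E\<^sup>2 - 2 * \<bar>q\<bar> * E * S + p3 * S\<^sup>2 - \<epsilon> * (E\<^sup>2 + S\<^sup>2))
      = ((p1 - \<epsilon>) * E - \<bar>q\<bar> * S)\<^sup>2 + ((p1 - \<epsilon>) * (p3 - \<epsilon>) - \<bar>q\<bar>\<^sup>2) * S\<^sup>2"
    by (simp add: algebra_simps power2_eq_square)
  ultimately have "(p1 - \<epsilon>) * (p1 * E\<^sup>2 - 2 * \<bar>q\<bar> * E * S + p3 * S\<^sup>2 - \<epsilon> * (E\<^sup>2 + S\<^sup>2))
      = ((p1 - \<epsilon>) * E - \<bar>q\<bar> * S)\<^sup>2 + \<epsilon>\<^sup>2 * S\<^sup>2"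
    by simp
  then have "0 \<le> (p1 - \<epsilon>) * (p1 * E\<^sup>2 - 2 * \<bar>q\<bar> * E * S + p3 * S\<^sup>2 - \<epsilon> * (E\<^sup>2 + S\<^sup>2))"
    by simp
  then have "\<epsilon> * (E\<^sup>2 + S\<^sup>2) \<le> p1 * E\<^sup>2 - 2 * \<bar>q\<bar> * E * S + p3 * S\<^sup>2"
    using \<open>\<epsilon> < p1\<close> by (simp add: zero_le_mult_iff)
  moreover have "q * (e \<bullet> s) \<le> \<bar>q\<bar> * (E * S)"
    unfolding E_def S_def
    by (metis Cauchy_Schwarz_ineq2 abs_mult abs_ge_self mult_left_mono abs_ge_zero order_trans)
  ultimately show ?thesis
    unfolding \<epsilon>_def E_def S_def by (simp add: dot_square_norm algebra_simps)
qed

lemma cross_term_le_of_le: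
  fixes E W H L kp kd b :: real
  assumes "0 \<le> W" "W \<le> E" "0 \<le> H" "H \<le> L * E" "0 \<le> L" "0 < b" "L \<le> b * kd" "0 \<le> kp"
  shows "(kp * E + kd * W) * H + H\<^sup>2 / (4 * b) \<le> L * (kp + kd) * (E\<^sup>2 + W\<^sup>2)"
proof -
  have "0 \<le> kd"
    using assms by (metis order_trans zero_le_mult_iff not_less)
  have "H * H \<le> H * (L * E)" and "H * (L * E) \<le> H * (b * kd * E)"
    using assms by (auto intro!: mult_left_mono mult_right_mono)
  then have "H\<^sup>2 / (4 * b) \<le> kd * E / 4 * H"
    using \<open>0 < b\<close> by (simp add: divide_le_eq power2_eq_square algebra_simps)
  then have "(kp * E + kd * W) * H + H\<^sup>2 / (4 * b) \<le> (kp * E + kd * W + kd * E / 4) * H"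
    by (simp add: algebra_simps)
  also have "\<dots> \<le> (kp * E + kd * W + kd * E / 4) * (L * E)"
    using assms \<open>0 \<le> kd\<close> by (intro mult_left_mono) auto
  also have "\<dots> \<le> L * (kp + kd) * (E\<^sup>2 + W\<^sup>2)"
  proof -
    have "kd * (E * W) \<le> kd * ((E\<^sup>2 + W\<^sup>2) / 2)"
      using sum_squares_bound[of E W] \<open>0 \<le> kd\<close> by (intro mult_left_mono) auto
    moreover have "0 \<le> kd * E\<^sup>2" "0 \<le> kd * W\<^sup>2" "0 \<le> kp * W\<^sup>2"
      using \<open>0 \<le> kd\<close> \<open>0 \<le> kp\<close> by simp_all
    ultimately have "E * (kp * E + kd * W + kd * E / 4) \<le> (kp + kd) * (E\<^sup>2 + W\<^sup>2)"
      by (simp add: algebra_simps power2_eq_square)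
    then have "L * (E * (kp * E + kd * W + kd * E / 4)) \<le> L * ((kp + kd) * (E\<^sup>2 + W\<^sup>2))"
      using \<open>0 \<le> L\<close> by (rule mult_left_mono)
    then show ?thesis
      by (simp add: algebra_simps)
  qed
  finally show ?thesis .
qed

lemma cross_term_le:
  fixes E W H L1 L2 kp kd b :: real
  assumes "0 \<le> E" "0 \<le> W" "0 \<le> H" "H \<le> L1 * E + L2 * W" "0 \<le> L1" "0 \<le> L2" "0 < b"
    and "(L1 + L2) / b \<le> kp" "(L1 + L2) / b \<le> kd"
  shows "(kp * E + kd * W) * H + H\<^sup>2 / (4 * b) \<le> (L1 + L2) * (kp + kd) * (E\<^sup>2 + W\<^sup>2)"
proof -
  have L: "0 \<le> L1 + L2" "L1 + L2 \<le> b * kp" "L1 + L2 \<le> b * kd"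
    using assms by (simp_all add: pos_divide_le_eq mult.commute)
  have "0 \<le> kp" "0 \<le> kd"
    using assms L by (meson divide_nonneg_pos order_trans)+
  show ?thesis
  proof (cases "W \<le> E")
    case True
    have "L1 * E + L2 * W \<le> (L1 + L2) * E"
      using True assms by (simp add: distrib_right mult_left_mono)
    then show ?thesis
      using cross_term_le_of_le[of W E H "L1 + L2" b kd kp] assms L True \<open>0 \<le> kp\<close> by linarith
  next
    case False
    have "L1 * E + L2 * W \<le> (L1 + L2) * W"
      using False assms by (simp add: distrib_right mult_left_mono)
    then have "(kd * W + kp * E) * H + H\<^sup>2 / (4 * b) \<le> (L1 + L2) * (kd + kp) * (W\<^sup>2 + E\<^sup>2)"
      using cross_term_le_of_le[of E W H "L1 + L2" b kp kd] assms L False \<open>0 \<le> kd\<close> by linarith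
    then show ?thesis
      by (simp add: add.commute)
  qed
qed

lemma le_sqrt_mult_exp_if_square_le:
  fixes X S c C \<gamma> t :: real
  assumes "c * X\<^sup>2 \<le> C * S\<^sup>2 * exp (- \<gamma> * t)" and "0 < c" "0 < C" "0 \<le> X" "0 \<le> S"
  shows "X \<le> sqrt (C / c) * exp (- (\<gamma> / 2) * t) * S"
proof -
  have "X\<^sup>2 \<le> C / c * exp (- \<gamma> * t) * S\<^sup>2"
    using assms(1,2) by (simp add: pos_le_divide_eq field_simps)
  also have "\<dots> = (sqrt (C / c) * exp (- (\<gamma> / 2) * t) * S)\<^sup>2"
  proof -
    have "(sqrt (C / c))\<^sup>2 = C / c"
      using assms(2,3) by simp
    moreover have "(exp (- (\<gamma> / 2) * t))\<^sup>2 = exp (- \<gamma> * t)"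
      by (simp add: power2_eq_square flip: exp_add)
    ultimately show ?thesis
      by (simp add: power_mult_distrib)
  qed
  finally show ?thesis
    by (rule power2_le_imp_le) (use assms(2-5) in simp)
qed

section \<open>Closed-loop trajectories\<close>

lemma has_real_derivative_inner:
  assumes "(f has_vector_derivative f') (at t within S)" and "(g has_vector_derivative g') (at t within S)"
  shows "((\<lambda>t. f t \<bullet> g t) has_real_derivative f t \<bullet> g' + f' \<bullet> g t) (at t within S)"
  using bounded_bilinear.has_vector_derivative[OF bounded_bilinear_inner assms]
  by (simp add: has_real_derivative_iff_has_vector_derivative)

lemma exp_decay_if_derivative_le:
  fixes V V' :: "real \<Rightarrow> real"
  assumes "0 \<le> t"
    and deriv: "\<And>s. s \<in> {0..t} \<Longrightarrow> (V has_real_derivative V' s) (at s within {0..t})"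
    and decay: "\<And>s. s \<in> {0..t} \<Longrightarrow> V' s \<le> - \<gamma> * V s"
  shows "V t \<le> V 0 * exp (- \<gamma> * t)"
proof (cases "t = 0")
  case False
  with \<open>0 \<le> t\<close> have "0 < t" by simp
  define W where "W s = exp (\<gamma> * s) * V s" for s
  have "(W has_derivative (\<lambda>h. h * (exp (\<gamma> * s) * (\<gamma> * V s + V' s)))) (at s within {0..t})"
    if "0 \<le> s" "s \<le> t" for s
  proof -
    have "(W has_real_derivative \<gamma> * exp (\<gamma> * s) * V s + exp (\<gamma> * s) * V' s) (at s within {0..t})"
      unfolding W_def using deriv[of s] that by (auto intro!: derivative_eq_intros)
    then show ?thesis
      unfolding has_field_derivative_def
      by (rule has_derivative_eq_rhs) (simp add: fun_eq_iff algebra_simps)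
  qed
  from mvt_simple[OF \<open>0 < t\<close> this]
  obtain s where "s \<in> {0<..<t}" and "W t - W 0 = (t - 0) * (exp (\<gamma> * s) * (\<gamma> * V s + V' s))"
    by blast
  moreover have "\<gamma> * V s + V' s \<le> 0"
    using decay[of s] \<open>s \<in> {0<..<t}\<close> by simp
  then have "t * (exp (\<gamma> * s) * (\<gamma> * V s + V' s)) \<le> 0"
    using \<open>0 < t\<close> by (simp add: mult_nonneg_nonpos)
  ultimately have "exp (\<gamma> * t) * V t \<le> V 0"
    by (simp add: W_def)
  then have "exp (- \<gamma> * t) * (exp (\<gamma> * t) * V t) \<le> exp (- \<gamma> * t) * V 0"
    by (rule mult_left_mono) simp
  then show ?thesis
    by (simp add: exp_minus field_simps)
qed simp

lemma closed_loop_has_vector_derivatives: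
  assumes sol: "closed_loop_solution f kp ki kd y T x1 x2" and "t < T" and s: "s \<in> {0..t}"
  defines "w \<equiv> \<lambda>s. f (x1 s) (x2 s) (pid_input kp ki kd y x1 x2 s)"
  shows "((\<lambda>s. y - x1 s) has_vector_derivative - x2 s) (at s within {0..t})"
    and "((\<lambda>s. - x2 s) has_vector_derivative - w s) (at s within {0..t})"
    and "(pid_input kp ki kd y x1 x2 has_vector_derivative
          kp *\<^sub>R (- x2 s) + ki *\<^sub>R (y - x1 s) - kd *\<^sub>R w s) (at s within {0..t})"
proof -
  have sub: "{0..t} \<subseteq> {0..<T}"
    using \<open>t < T\<close> by auto
  have dx1: "(x1 has_vector_derivative x2 s') (at s' within {0..t})"
    and dx2: "(x2 has_vector_derivative w s') (at s' within {0..t})" if "s' \<in> {0..t}" for s'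
    using sol that sub unfolding closed_loop_solution_def w_def
    by (meson has_vector_derivative_within_subset subsetD)+
  show "((\<lambda>s. y - x1 s) has_vector_derivative - x2 s) (at s within {0..t})"
    using dx1[OF s] by (auto intro!: derivative_eq_intros)
  show "((\<lambda>s. - x2 s) has_vector_derivative - w s) (at s within {0..t})"
    using dx2[OF s] by (auto intro!: derivative_eq_intros)
  have "continuous (at s' within {0..t}) x1" if "s' \<in> {0..t}" for s'
    using dx1[OF that] by (rule has_vector_derivative_continuous)
  then have "continuous_on {0..t} (\<lambda>s. y - x1 s)"
    by (intro continuous_intros) (simp add: continuous_on_eq_continuous_within)
  then have "((\<lambda>s. integral {0..s} (\<lambda>s. y - x1 s)) has_vector_derivative y - x1 s) (at s within {0..t})"
    using integral_has_vector_derivative s by blast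
  then show "(pid_input kp ki kd y x1 x2 has_vector_derivative
          kp *\<^sub>R (- x2 s) + ki *\<^sub>R (y - x1 s) - kd *\<^sub>R w s) (at s within {0..t})"
    unfolding pid_input_def[abs_def] using dx1[OF s] dx2[OF s]
    by (auto intro!: derivative_eq_intros simp: algebra_simps)
qed

section \<open>The Lyapunov function\<close>

locale pid_gains =
  fixes L1 L2 b kp ki kd :: real
  assumes L1_nonneg: "0 \<le> L1" and L2_nonneg: "0 \<le> L2" and b_pos: "0 < b"
    and kp_pos: "0 < kp" and ki_pos: "0 < ki" and kd_pos: "0 < kd"
    and kp_large: "2 * ki * kd + (L1 + L2) * (kp + kd) / b < kp\<^sup>2"
    and kd_large: "kp / b + (L1 + L2) * (kp + kd) / b < kd\<^sup>2"
begin

text \<open>The weights of the Lyapunov function below: p3 and q make r \<bullet> e and r \<bullet> v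
  appear in its derivative exactly as in 2 kd b r \<bullet> (kp e + kd v), which is then absorbed
  by completing the square against -kd b |r|^2; p1 makes the remaining e \<bullet> v terms cancel.\<close>
definition q :: real where "q = 2 * kd * b * (kp\<^sup>2 - ki * kd) / ki"
definition p3 :: real where "p3 = 2 * kp * kd * b / ki - 1"
definition p1 :: real where "p1 = q * kp - ki * kd"

definition lyapunov :: "'a::real_inner \<Rightarrow> 'a \<Rightarrow> 'a \<Rightarrow> real" where
  "lyapunov e v r = (r \<bullet> r) / 2
     + (p1 * (e \<bullet> e) - 2 * q * (e \<bullet> (r - kd *\<^sub>R v)) + p3 * ((r - kd *\<^sub>R v) \<bullet> (r - kd *\<^sub>R v))) / 2"

text \<open>The derivative of lyapunov along e' = v, v' = -w, r' = kp v + ki e - kd w.\<close>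
definition lyapunov_deriv :: "'a::real_inner \<Rightarrow> 'a \<Rightarrow> 'a \<Rightarrow> 'a \<Rightarrow> real" where
  "lyapunov_deriv e v r w = r \<bullet> (kp *\<^sub>R v + ki *\<^sub>R e - kd *\<^sub>R w) + p1 * (e \<bullet> v)
     - q * (v \<bullet> (r - kd *\<^sub>R v) + e \<bullet> (kp *\<^sub>R v + ki *\<^sub>R e))
     + p3 * ((r - kd *\<^sub>R v) \<bullet> (kp *\<^sub>R v + ki *\<^sub>R e))"

lemma lipschitz_sum_div_b_le: "(L1 + L2) / b \<le> kp" "(L1 + L2) / b \<le> kd"
proof -
  define c where "c = (L1 + L2) / b"
  have "0 \<le> c"
    unfolding c_def using L1_nonneg L2_nonneg b_pos by simp
  then have "c * kp \<le> c * (kp + kd)" "c * kd \<le> c * (kp + kd)"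
    using kp_pos kd_pos by (simp_all add: mult_left_mono)
  moreover have "c * (kp + kd) = (L1 + L2) * (kp + kd) / b" "0 < 2 * ki * kd" "0 < kp / b"
    using ki_pos kd_pos kp_pos b_pos by (simp_all add: c_def)
  then have "c * (kp + kd) < kp * kp" "c * (kp + kd) < kd * kd"
    using kp_large kd_large unfolding power2_eq_square by linarith+
  ultimately have "c * kp < kp * kp" "c * kd < kd * kd"
    by linarith+
  then show "(L1 + L2) / b \<le> kp" "(L1 + L2) / b \<le> kd"
    unfolding c_def[symmetric] using kp_pos kd_pos by simp_all
qed

lemma gain_inequalities: "2 * ki * kd < kp\<^sup>2" "kp < b * kd\<^sup>2" "2 * ki < kd * kp * b"
proof -
  have "0 \<le> (L1 + L2) * (kp + kd) / b"
    using L1_nonneg L2_nonneg kp_pos kd_pos b_pos by simp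
  then have kp2: "2 * ki * kd < kp\<^sup>2" and "kp / b < kd\<^sup>2"
    using kp_large kd_large by linarith+
  then have kd2: "kp < b * kd\<^sup>2"
    using b_pos by (simp add: pos_divide_less_eq mult.commute)
  show "2 * ki * kd < kp\<^sup>2" "kp < b * kd\<^sup>2"
    using kp2 kd2 by simp_all
  have "kp * (2 * ki * kd) < b * kd\<^sup>2 * kp\<^sup>2"
    using kp2 kd2 kp_pos ki_pos kd_pos by (intro mult_strict_mono) auto
  then have "(kd * kp) * (2 * ki) < (kd * kp) * (kd * kp * b)"
    by (simp add: power2_eq_square algebra_simps)
  then show "2 * ki < kd * kp * b"
    using kp_pos kd_pos by simp
qed

lemma lyapunov_weights: "0 < q" "0 < p3" "0 < p1" "q\<^sup>2 < p1 * p3"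
proof -
  note kp2 = gain_inequalities(1) and kd2 = gain_inequalities(2)
    and ki_small = gain_inequalities(3)
  define X where "X = kp\<^sup>2 - ki * kd"
  have "0 < ki * kd"
    using ki_pos kd_pos by simp
  then have "ki * kd < X" "kp\<^sup>2 / 2 < X"
    using kp2 unfolding X_def by (simp_all add: algebra_simps)
  then have "0 < X"
    using \<open>0 < ki * kd\<close> by linarith
  then show "0 < q"
    unfolding q_def X_def[symmetric] using ki_pos kd_pos b_pos by simp
  show "0 < p3"
    unfolding p3_def using ki_small ki_pos by (simp add: less_divide_eq algebra_simps)
  have "(2 * ki) * (2 * X) < (kd * kp * b) * (2 * X)"
    using ki_small \<open>0 < ki * kd\<close> \<open>ki * kd < X\<close> by (intro mult_strict_right_mono) auto
  then have "4 * X < q * kp"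
    unfolding q_def X_def[symmetric] using ki_pos by (simp add: less_divide_eq algebra_simps)
  then show "0 < p1"
    unfolding p1_def using \<open>0 < ki * kd\<close> \<open>ki * kd < X\<close> by linarith
  have "2 * ki * kp * kd * b \<le> (2 * b * (kp\<^sup>2 / 2)) * (b * kd\<^sup>2)"
    using ki_small kd_pos kp_pos b_pos by (simp add: power2_eq_square algebra_simps)
  also have "\<dots> < (2 * b * X) * (2 * b * kd\<^sup>2 - kp)"
  proof (rule mult_strict_mono)
    show "2 * b * (kp\<^sup>2 / 2) < 2 * b * X"
      using \<open>kp\<^sup>2 / 2 < X\<close> b_pos by simp
    show "b * kd\<^sup>2 < 2 * b * kd\<^sup>2 - kp"
      using kd2 by simp
    show "0 < 2 * b * X"
      using \<open>0 < X\<close> b_pos by simp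
  qed (use b_pos in simp)
  finally have "0 < 2 * b * X * (2 * b * kd\<^sup>2 - kp) - 2 * ki * kp * kd * b + ki\<^sup>2"
    using ki_pos by (simp add: add_pos_nonneg)
  moreover have "ki\<^sup>2 * (p1 * p3 - q\<^sup>2)
      = kd * ki * (2 * b * X * (2 * b * kd\<^sup>2 - kp) - 2 * ki * kp * kd * b + ki\<^sup>2)"
    unfolding p1_def p3_def q_def X_def using ki_pos by (simp add: field_simps power2_eq_square)
  ultimately have "0 < ki\<^sup>2 * (p1 * p3 - q\<^sup>2)"
    using ki_pos kd_pos by simp
  then show "q\<^sup>2 < p1 * p3"
    by (simp add: zero_less_mult_iff)
qed

lemma lyapunov_deriv_expand:
  fixes e v r w :: "'a::real_inner"
  shows "lyapunov_deriv e v r w = - kd * (r \<bullet> w) + 2 * kd * b * (r \<bullet> (kp *\<^sub>R e + kd *\<^sub>R v))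
    - 2 * kp * kd\<^sup>2 * b * (e \<bullet> v) - (2 * kd\<^sup>2 * b - kp) * kd * (v \<bullet> v)
    - 2 * kd * b * (kp\<^sup>2 - ki * kd) * (e \<bullet> e)"
proof -
  have coeffs: "kp + p3 * kp - q = 2 * kd\<^sup>2 * b" "ki + p3 * ki = 2 * kp * kd * b"
    "p1 - q * kp - p3 * ki * kd = - 2 * kp * kd\<^sup>2 * b" "q * kd - p3 * kp * kd = - (2 * kd\<^sup>2 * b - kp) * kd"
    "q * ki = 2 * kd * b * (kp\<^sup>2 - ki * kd)"
    unfolding p1_def p3_def q_def using ki_pos by (simp_all add: field_simps power2_eq_square)
  have "lyapunov_deriv e v r w = - kd * (r \<bullet> w) + (kp + p3 * kp - q) * (r \<bullet> v)
      + (ki + p3 * ki) * (r \<bullet> e) + (p1 - q * kp - p3 * ki * kd) * (e \<bullet> v)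
      + (q * kd - p3 * kp * kd) * (v \<bullet> v) - q * ki * (e \<bullet> e)"
    unfolding lyapunov_deriv_def
    by (simp add: inner_simps inner_commute[of v r] inner_commute[of v e] inner_commute[of e r]
        algebra_simps)
  also have "\<dots> = - kd * (r \<bullet> w) + 2 * kd * b * (r \<bullet> (kp *\<^sub>R e + kd *\<^sub>R v))
    - 2 * kp * kd\<^sup>2 * b * (e \<bullet> v) - (2 * kd\<^sup>2 * b - kp) * kd * (v \<bullet> v)
    - 2 * kd * b * (kp\<^sup>2 - ki * kd) * (e \<bullet> e)"
    unfolding coeffs by (simp add: inner_simps algebra_simps power2_eq_square)
  finally show ?thesis .
qed

lemma lyapunov_deriv_eq:
  fixes e v r k h :: "'a::real_inner"
  defines "z \<equiv> kp *\<^sub>R e + kd *\<^sub>R v"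
  shows "lyapunov_deriv e v r (k + h)
    = - kd * (r \<bullet> k - b * (r \<bullet> r)) - kd * b * (norm (r - z + (1 / (2 * b)) *\<^sub>R h))\<^sup>2
      - kd * b * (kp\<^sup>2 - 2 * ki * kd) * (e \<bullet> e) - kd * (b * kd\<^sup>2 - kp) * (v \<bullet> v)
      + kd * ((h \<bullet> h) / (4 * b) - z \<bullet> h)"
proof -
  define m where "m = (2 * b) *\<^sub>R z - h"
  have "r - (1 / (2 * b)) *\<^sub>R m = r - z + (1 / (2 * b)) *\<^sub>R h"
    using b_pos by (simp add: m_def algebra_simps)
  then have square: "- b * (r \<bullet> r) + r \<bullet> m
      = - b * (norm (r - z + (1 / (2 * b)) *\<^sub>R h))\<^sup>2 + b * (z \<bullet> z) - z \<bullet> h + (h \<bullet> h) / (4 * b)"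
    using b_pos unfolding m_def power2_norm_eq_inner
    by (simp add: inner_simps inner_commute[of z r] inner_commute[of h r] inner_commute[of h z]
        field_simps power2_eq_square)
  have "z \<bullet> z = kp\<^sup>2 * (e \<bullet> e) + 2 * kp * kd * (e \<bullet> v) + kd\<^sup>2 * (v \<bullet> v)"
    unfolding z_def by (simp add: inner_simps inner_commute[of v e] algebra_simps power2_eq_square)
  moreover have "lyapunov_deriv e v r (k + h) = - kd * (r \<bullet> k) + kd * (- b * (r \<bullet> r) + r \<bullet> m)
      + kd * b * (r \<bullet> r) - 2 * kp * kd\<^sup>2 * b * (e \<bullet> v) - (2 * kd\<^sup>2 * b - kp) * kd * (v \<bullet> v)
      - 2 * kd * b * (kp\<^sup>2 - ki * kd) * (e \<bullet> e)"
    unfolding lyapunov_deriv_expand m_def z_def by (simp add: inner_simps algebra_simps)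
  ultimately show ?thesis
    unfolding square by (simp add: algebra_simps power2_eq_square)
qed

lemma lyapunov_deriv_le:
  fixes e v r k h :: "'a::real_inner"
  assumes "b * (r \<bullet> r) \<le> r \<bullet> k" and "norm h \<le> L1 * norm e + L2 * norm v"
  shows "lyapunov_deriv e v r (k + h)
    \<le> - kd * b * (norm (r - (kp *\<^sub>R e + kd *\<^sub>R v) + (1 / (2 * b)) *\<^sub>R h))\<^sup>2
      - kd * b * (kp\<^sup>2 - 2 * ki * kd - (L1 + L2) * (kp + kd) / b) * (norm e)\<^sup>2
      - kd * b * (kd\<^sup>2 - kp / b - (L1 + L2) * (kp + kd) / b) * (norm v)\<^sup>2"
proof -
  define z where "z = kp *\<^sub>R e + kd *\<^sub>R v"
  define K where "K = (L1 + L2) * (kp + kd)"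
  have "- (z \<bullet> h) \<le> norm z * norm h"
    using Cauchy_Schwarz_ineq2[of z h] by linarith
  also have "\<dots> \<le> (kp * norm e + kd * norm v) * norm h"
    unfolding z_def using kp_pos kd_pos
    by (intro mult_right_mono) (auto intro: norm_triangle_le)
  finally have "(h \<bullet> h) / (4 * b) - z \<bullet> h
      \<le> (kp * norm e + kd * norm v) * norm h + (norm h)\<^sup>2 / (4 * b)"
    by (simp add: dot_square_norm)
  also have "\<dots> \<le> K * ((norm e)\<^sup>2 + (norm v)\<^sup>2)"
    unfolding K_def
    by (rule cross_term_le) (use assms L1_nonneg L2_nonneg b_pos lipschitz_sum_div_b_le in auto)
  finally have "kd * ((h \<bullet> h) / (4 * b) - z \<bullet> h) \<le> kd * (K * ((norm e)\<^sup>2 + (norm v)\<^sup>2))"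
    using kd_pos by (simp add: mult_left_mono)
  moreover have "0 \<le> kd * (r \<bullet> k - b * (r \<bullet> r))"
    using assms(1) kd_pos by simp
  moreover have "kd * b * (kp\<^sup>2 - 2 * ki * kd - K / b) = kd * b * (kp\<^sup>2 - 2 * ki * kd) - kd * K"
    "kd * b * (kd\<^sup>2 - kp / b - K / b) = kd * (b * kd\<^sup>2 - kp) - kd * K"
    using b_pos by (simp_all add: field_simps)
  ultimately show ?thesis
    unfolding lyapunov_deriv_eq z_def[symmetric] K_def[symmetric]
    by (simp add: dot_square_norm algebra_simps)
qed

lemma lyapunov_le: "\<exists>C>0. \<forall>e v r :: 'a::real_inner.
  lyapunov e v r \<le> C * ((norm e)\<^sup>2 + (norm v)\<^sup>2 + (norm r)\<^sup>2)"
proof -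
  define C where "C = 1 + p1 + q + 2 * (p3 + q) * (1 + kd\<^sup>2)"
  have weights: "0 < p1" "0 < q" "0 < p3"
    using lyapunov_weights by simp_all
  then have "0 < C"
    unfolding C_def by (simp add: add_pos_nonneg)
  moreover have "lyapunov e v r \<le> C * ((norm e)\<^sup>2 + (norm v)\<^sup>2 + (norm r)\<^sup>2)" for e v r :: 'a
  proof -
    define s where "s = r - kd *\<^sub>R v"
    have "- (e \<bullet> s) \<le> norm e * norm s"
      using Cauchy_Schwarz_ineq2[of e s] by (simp add: abs_le_iff)
    also have "\<dots> \<le> ((norm e)\<^sup>2 + (norm s)\<^sup>2) / 2"
      using sum_squares_bound[of "norm e" "norm s"] by (simp add: mult.assoc)
    finally have "q * (- (e \<bullet> s)) \<le> q * (((norm e)\<^sup>2 + (norm s)\<^sup>2) / 2)"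
      by (rule mult_left_mono) (use weights in simp)
    then have "lyapunov e v r \<le> (norm r)\<^sup>2 / 2 + (p1 + q) / 2 * (norm e)\<^sup>2 + (p3 + q) / 2 * (norm s)\<^sup>2"
      unfolding lyapunov_def s_def[symmetric] by (simp add: dot_square_norm field_simps)
    moreover have "(norm s)\<^sup>2 \<le> 2 * ((norm r)\<^sup>2 + kd\<^sup>2 * (norm v)\<^sup>2)"
      using norm_diff_square_le[of r "kd *\<^sub>R v"] kd_pos by (simp add: s_def power_mult_distrib)
    then have "(p3 + q) / 2 * (norm s)\<^sup>2 \<le> (p3 + q) / 2 * (2 * ((norm r)\<^sup>2 + kd\<^sup>2 * (norm v)\<^sup>2))"
      by (rule mult_left_mono) (use weights in simp)
    moreover have "(p3 + q) / 2 * (2 * ((norm r)\<^sup>2 + kd\<^sup>2 * (norm v)\<^sup>2))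
        = (p3 + q) * (norm r)\<^sup>2 + (p3 + q) * kd\<^sup>2 * (norm v)\<^sup>2"
      "(1 / 2 + (p3 + q)) * (norm r)\<^sup>2 = (norm r)\<^sup>2 / 2 + (p3 + q) * (norm r)\<^sup>2"
      by (simp_all add: field_simps)
    ultimately have "lyapunov e v r
        \<le> (1 / 2 + (p3 + q)) * (norm r)\<^sup>2 + (p1 + q) / 2 * (norm e)\<^sup>2 + (p3 + q) * kd\<^sup>2 * (norm v)\<^sup>2"
      by linarith
    also have "\<dots> \<le> C * (norm r)\<^sup>2 + C * (norm e)\<^sup>2 + C * (norm v)\<^sup>2"
      unfolding C_def using weights
      by (intro add_mono mult_right_mono) (auto simp: algebra_simps add_pos_nonneg)
    finally show ?thesis
      by (simp add: algebra_simps)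
  qed
  ultimately show ?thesis
    by blast
qed

lemma lyapunov_ge: "\<exists>c>0. \<forall>e v r :: 'a::real_inner. c * (norm e + norm v)\<^sup>2 \<le> lyapunov e v r"
proof -
  define \<epsilon> where "\<epsilon> = (p1 * p3 - q\<^sup>2) / (p1 + p3)"
  define m where "m = min 1 \<epsilon>"
  define c where "c = min (\<epsilon> / 4) (m * kd\<^sup>2 / 8)"
  have "0 < \<epsilon>"
    using lyapunov_weights by (simp add: \<epsilon>_def)
  then have m: "0 < m" "m \<le> 1" "m \<le> \<epsilon>"
    by (auto simp: m_def)
  then have "0 < c"
    using kd_pos \<open>0 < \<epsilon>\<close> by (simp add: c_def)
  moreover have "c * (norm e + norm v)\<^sup>2 \<le> lyapunov e v r" for e v r :: 'a
  proof -
    define s where "s = r - kd *\<^sub>R v"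
    have "\<epsilon> * ((norm e)\<^sup>2 + (norm s)\<^sup>2) \<le> p1 * (e \<bullet> e) - 2 * q * (e \<bullet> s) + p3 * (s \<bullet> s)"
      unfolding \<epsilon>_def using lyapunov_weights by (intro inner_quadratic_form_ge) simp_all
    then have "(norm r)\<^sup>2 / 2 + \<epsilon> / 2 * (norm e)\<^sup>2 + \<epsilon> / 2 * (norm s)\<^sup>2 \<le> lyapunov e v r"
      unfolding lyapunov_def s_def[symmetric] by (simp add: dot_square_norm field_simps)
    moreover have "(kd * norm v)\<^sup>2 \<le> 2 * ((norm r)\<^sup>2 + (norm s)\<^sup>2)"
      using norm_diff_square_le[of r s] kd_pos by (simp add: s_def)
    then have "m / 4 * (kd * norm v)\<^sup>2 \<le> m / 4 * (2 * ((norm r)\<^sup>2 + (norm s)\<^sup>2))"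
      using m by (intro mult_left_mono) simp_all
    moreover have "m / 2 * (norm r)\<^sup>2 \<le> (norm r)\<^sup>2 / 2" "m / 2 * (norm s)\<^sup>2 \<le> \<epsilon> / 2 * (norm s)\<^sup>2"
      using m by (simp_all add: mult_right_mono mult_left_le_one_le)
    moreover have "m / 4 * (2 * ((norm r)\<^sup>2 + (norm s)\<^sup>2)) = m / 2 * (norm r)\<^sup>2 + m / 2 * (norm s)\<^sup>2"
      "m / 4 * (kd * norm v)\<^sup>2 = m * kd\<^sup>2 / 4 * (norm v)\<^sup>2"
      by (simp_all add: field_simps power_mult_distrib)
    ultimately have "\<epsilon> / 2 * (norm e)\<^sup>2 + m * kd\<^sup>2 / 4 * (norm v)\<^sup>2 \<le> lyapunov e v r"
      by linarith
    moreover have "c * (norm e + norm v)\<^sup>2 \<le> 2 * c * (norm e)\<^sup>2 + 2 * c * (norm v)\<^sup>2"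
      using square_sum_le[of "norm e" "norm v"] \<open>0 < c\<close> mult_left_mono[of _ _ c]
      by (fastforce simp: algebra_simps)
    moreover have "2 * c * (norm e)\<^sup>2 \<le> \<epsilon> / 2 * (norm e)\<^sup>2"
      by (rule mult_right_mono) (simp_all add: c_def)
    moreover have "2 * c * (norm v)\<^sup>2 \<le> m * kd\<^sup>2 / 4 * (norm v)\<^sup>2"
      by (rule mult_right_mono) (simp_all add: c_def)
    ultimately show ?thesis
      by linarith
  qed
  ultimately show ?thesis
    by blast
qed

lemma norm_le_completed_square:
  fixes e v r h :: "'a::real_inner"
  assumes "norm h \<le> L1 * norm e + L2 * norm v"
  shows "(norm r)\<^sup>2 \<le> 2 * (norm (r - (kp *\<^sub>R e + kd *\<^sub>R v) + (1 / (2 * b)) *\<^sub>R h))\<^sup>2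
    + 4 * (kp + kd + (L1 + L2) / (2 * b))\<^sup>2 * ((norm e)\<^sup>2 + (norm v)\<^sup>2)"
proof -
  define \<rho> where "\<rho> = r - (kp *\<^sub>R e + kd *\<^sub>R v) + (1 / (2 * b)) *\<^sub>R h"
  define A where "A = kp + kd + (L1 + L2) / (2 * b)"
  have "norm h / (2 * b) \<le> (L1 * norm e + L2 * norm v) / (2 * b)"
    using assms b_pos by (simp add: divide_right_mono)
  also have "\<dots> \<le> (L1 + L2) / (2 * b) * (norm e + norm v)"
    using L1_nonneg L2_nonneg b_pos
    by (simp add: field_simps mult_right_mono add_mono mult_left_mono)
  finally have h_le: "norm ((1 / (2 * b)) *\<^sub>R h) \<le> (L1 + L2) / (2 * b) * (norm e + norm v)"
    using b_pos by simp
  have "norm (kp *\<^sub>R e + kd *\<^sub>R v) \<le> kp * norm e + kd * norm v"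
    using norm_triangle_ineq[of "kp *\<^sub>R e" "kd *\<^sub>R v"] kp_pos kd_pos by simp
  also have "\<dots> \<le> (kp + kd) * (norm e + norm v)"
    using kp_pos kd_pos by (simp add: algebra_simps)
  finally have "norm (r - \<rho>) \<le> A * (norm e + norm v)"
    unfolding \<rho>_def A_def
    using norm_triangle_ineq4[of "kp *\<^sub>R e + kd *\<^sub>R v" "(1 / (2 * b)) *\<^sub>R h"] h_le
    by (simp add: algebra_simps)
  then have "norm r \<le> norm \<rho> + A * (norm e + norm v)"
    using norm_triangle_ineq[of \<rho> "r - \<rho>"] by simp
  then have "(norm r)\<^sup>2 \<le> (norm \<rho> + A * (norm e + norm v))\<^sup>2"
    by (simp add: power_mono)
  also have "\<dots> \<le> 2 * (norm \<rho>)\<^sup>2 + 2 * (A\<^sup>2 * (norm e + norm v)\<^sup>2)"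
    using square_sum_le[of "norm \<rho>" "A * (norm e + norm v)"] by (simp add: power_mult_distrib)
  also have "\<dots> \<le> 2 * (norm \<rho>)\<^sup>2 + 2 * (A\<^sup>2 * (2 * ((norm e)\<^sup>2 + (norm v)\<^sup>2)))"
    using square_sum_le[of "norm e" "norm v"] by (simp add: mult_left_mono)
  finally show ?thesis
    unfolding \<rho>_def A_def by (simp add: algebra_simps)
qed

lemma lyapunov_deriv_le_neg: "\<exists>\<mu>>0. \<forall>e v r k h :: 'a::real_inner.
  b * (r \<bullet> r) \<le> r \<bullet> k \<longrightarrow> norm h \<le> L1 * norm e + L2 * norm v \<longrightarrow>
  lyapunov_deriv e v r (k + h) \<le> - \<mu> * ((norm e)\<^sup>2 + (norm v)\<^sup>2 + (norm r)\<^sup>2)"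
proof -
  define \<delta> where "\<delta> = min (kp\<^sup>2 - 2 * ki * kd - (L1 + L2) * (kp + kd) / b)
    (kd\<^sup>2 - kp / b - (L1 + L2) * (kp + kd) / b)"
  define D where "D = kd * b"
  define K where "K = 4 * (kp + kd + (L1 + L2) / (2 * b))\<^sup>2"
  define \<mu> where "\<mu> = min (D / 2) (D * \<delta> / (K + 1))"
  have "0 < \<delta>" "0 < D" "0 \<le> K"
    using kp_large kd_large kd_pos b_pos by (simp_all add: \<delta>_def D_def K_def)
  then have "0 < \<mu>"
    by (simp add: \<mu>_def)
  moreover have "lyapunov_deriv e v r (k + h) \<le> - \<mu> * ((norm e)\<^sup>2 + (norm v)\<^sup>2 + (norm r)\<^sup>2)"
    if "b * (r \<bullet> r) \<le> r \<bullet> k" "norm h \<le> L1 * norm e + L2 * norm v" for e v r k h :: 'a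
  proof -
    define P where "P = (norm (r - (kp *\<^sub>R e + kd *\<^sub>R v) + (1 / (2 * b)) *\<^sub>R h))\<^sup>2"
    define Z where "Z = (norm e)\<^sup>2 + (norm v)\<^sup>2"
    have "D * \<delta> * (norm e)\<^sup>2 \<le> kd * b * (kp\<^sup>2 - 2 * ki * kd - (L1 + L2) * (kp + kd) / b) * (norm e)\<^sup>2"
      "D * \<delta> * (norm v)\<^sup>2 \<le> kd * b * (kd\<^sup>2 - kp / b - (L1 + L2) * (kp + kd) / b) * (norm v)\<^sup>2"
      unfolding D_def \<delta>_def using kd_pos b_pos by (auto intro!: mult_right_mono mult_left_mono)
    then have "lyapunov_deriv e v r (k + h) \<le> - D * P - D * \<delta> * Z"
      using lyapunov_deriv_le[OF that] unfolding P_def Z_def D_def by (simp add: algebra_simps)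
    moreover have "\<mu> * (norm r)\<^sup>2 \<le> 2 * \<mu> * P + \<mu> * K * Z"
      using mult_left_mono[OF norm_le_completed_square[OF that(2), of r], of \<mu>] \<open>0 < \<mu>\<close>
      unfolding P_def Z_def K_def by (simp add: algebra_simps)
    moreover have "2 * \<mu> * P \<le> D * P"
      unfolding P_def by (rule mult_right_mono) (simp_all add: \<mu>_def)
    moreover have "\<mu> \<le> D * \<delta> / (K + 1)"
      by (simp add: \<mu>_def)
    then have "\<mu> * (K + 1) * Z \<le> D * \<delta> * Z"
      unfolding Z_def using \<open>0 \<le> K\<close> by (intro mult_right_mono) (simp_all add: pos_le_divide_eq)
    ultimately show ?thesis
      unfolding Z_def by (simp add: algebra_simps)
  qed
  ultimately show ?thesis
    by blast
qed

lemma lyapunov_decay_rate: "\<exists>\<gamma>>0. \<forall>e v r k h :: 'a::real_inner.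
  b * (r \<bullet> r) \<le> r \<bullet> k \<longrightarrow> norm h \<le> L1 * norm e + L2 * norm v \<longrightarrow>
  lyapunov_deriv e v r (k + h) \<le> - \<gamma> * lyapunov e v r"
proof -
  obtain \<mu> where "0 < \<mu>" and deriv: "\<And>e v r k h :: 'a. b * (r \<bullet> r) \<le> r \<bullet> k \<Longrightarrow>
      norm h \<le> L1 * norm e + L2 * norm v \<Longrightarrow>
      lyapunov_deriv e v r (k + h) \<le> - \<mu> * ((norm e)\<^sup>2 + (norm v)\<^sup>2 + (norm r)\<^sup>2)"
    using lyapunov_deriv_le_neg by blast
  obtain C where "0 < C" and upper: "\<And>e v r :: 'a.
      lyapunov e v r \<le> C * ((norm e)\<^sup>2 + (norm v)\<^sup>2 + (norm r)\<^sup>2)"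
    using lyapunov_le by blast
  have "\<mu> / C * lyapunov e v r \<le> \<mu> * ((norm e)\<^sup>2 + (norm v)\<^sup>2 + (norm r)\<^sup>2)" for e v r :: 'a
    using mult_left_mono[OF upper[of e v r], of "\<mu> / C"] \<open>0 < \<mu>\<close> \<open>0 < C\<close> by simp
  then show ?thesis
    using deriv \<open>0 < \<mu>\<close> \<open>0 < C\<close> by (intro exI[of _ "\<mu> / C"]) (fastforce intro: order_trans)
qed

lemma lyapunov_has_real_derivative:
  fixes e v r :: "real \<Rightarrow> 'a::real_inner"
  assumes "(e has_vector_derivative v t) (at t within S)" and "(v has_vector_derivative - w) (at t within S)"
    and "(r has_vector_derivative kp *\<^sub>R v t + ki *\<^sub>R e t - kd *\<^sub>R w) (at t within S)"
  shows "((\<lambda>t. lyapunov (e t) (v t) (r t)) has_real_derivative lyapunov_deriv (e t) (v t) (r t) w)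
    (at t within S)"
proof -
  define s where "s t = r t - kd *\<^sub>R v t" for t
  have ds: "(s has_vector_derivative kp *\<^sub>R v t + ki *\<^sub>R e t) (at t within S)"
    unfolding s_def using assms(2,3) by (auto intro!: derivative_eq_intros simp: algebra_simps)
  note inner = has_real_derivative_inner[OF assms(1) assms(1)]
    has_real_derivative_inner[OF assms(1) ds] has_real_derivative_inner[OF ds ds]
    has_real_derivative_inner[OF assms(3) assms(3)]
  have "((\<lambda>t. lyapunov (e t) (v t) (r t)) has_real_derivative
      (r t \<bullet> (kp *\<^sub>R v t + ki *\<^sub>R e t - kd *\<^sub>R w) + (kp *\<^sub>R v t + ki *\<^sub>R e t - kd *\<^sub>R w) \<bullet> r t) / 2
      + (p1 * (e t \<bullet> v t + v t \<bullet> e t) - 2 * q * (e t \<bullet> (kp *\<^sub>R v t + ki *\<^sub>R e t) + v t \<bullet> s t)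
         + p3 * (s t \<bullet> (kp *\<^sub>R v t + ki *\<^sub>R e t) + (kp *\<^sub>R v t + ki *\<^sub>R e t) \<bullet> s t)) / 2)
    (at t within S)"
    unfolding lyapunov_def s_def[symmetric]
    by (intro DERIV_add DERIV_diff DERIV_cmult DERIV_cdivide inner)
  then show ?thesis
    by (rule DERIV_cong) (simp add: lyapunov_deriv_def s_def inner_simps inner_commute field_simps)
qed

lemma closed_loop_lyapunov_decay:
  fixes f :: "real^'n \<Rightarrow> real^'n \<Rightarrow> real^'n \<Rightarrow> real^'n" and y ustar :: "real^'n"
  assumes plant: "monotone_lipschitz b L1 L2 f" and equilibrium: "f y 0 ustar = 0"
    and decay: "\<And>e v r k h :: real^'n. b * (r \<bullet> r) \<le> r \<bullet> k \<Longrightarrow>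
      norm h \<le> L1 * norm e + L2 * norm v \<Longrightarrow> lyapunov_deriv e v r (k + h) \<le> - \<gamma> * lyapunov e v r"
    and sol: "closed_loop_solution f kp ki kd y T x1 x2" and "0 \<le> t" "t < T"
  shows "lyapunov (y - x1 t) (- x2 t) (pid_input kp ki kd y x1 x2 t - ustar)
    \<le> lyapunov (y - x1 0) (- x2 0) (pid_input kp ki kd y x1 x2 0 - ustar) * exp (- \<gamma> * t)"
proof -
  define u where "u = pid_input kp ki kd y x1 x2"
  define w where "w s = f (x1 s) (x2 s) (u s)" for s
  define V where "V s = lyapunov (y - x1 s) (- x2 s) (u s - ustar)" for s
  have "V t \<le> V 0 * exp (- \<gamma> * t)"
  proof (rule exp_decay_if_derivative_le[OF \<open>0 \<le> t\<close>])
    fix s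
    assume s: "s \<in> {0..t}"
    note derivs = closed_loop_has_vector_derivatives[OF sol \<open>t < T\<close> s, folded u_def w_def]
    show "(V has_real_derivative lyapunov_deriv (y - x1 s) (- x2 s) (u s - ustar) (w s))
        (at s within {0..t})"
      unfolding V_def
      by (rule lyapunov_has_real_derivative) (use derivs in \<open>auto intro!: derivative_eq_intros\<close>)
    define h where "h = f (x1 s) (x2 s) ustar"
    have "b * ((u s - ustar) \<bullet> (u s - ustar)) \<le> (u s - ustar) \<bullet> (w s - h)"
      using plant unfolding monotone_lipschitz_def strongly_monotone_def w_def h_def
      by (simp add: dot_square_norm)
    moreover have "h = (f (x1 s) (x2 s) ustar - f y (x2 s) ustar) + (f y (x2 s) ustar - f y 0 ustar)"
      using equilibrium by (simp add: h_def)
    then have "norm h \<le> L1 * norm (x1 s - y) + L2 * norm (x2 s - 0)"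
      using plant unfolding monotone_lipschitz_def
      by (metis UNIV_I add_mono norm_triangle_le lipschitz_on_normD)
    then have "norm h \<le> L1 * norm (y - x1 s) + L2 * norm (- x2 s)"
      by (simp add: norm_minus_commute)
    ultimately show "lyapunov_deriv (y - x1 s) (- x2 s) (u s - ustar) (w s) \<le> - \<gamma> * V s"
      using decay[of "u s - ustar" "w s - h" h "y - x1 s" "- x2 s"] by (simp add: V_def)
  qed
  then show ?thesis
    by (simp add: V_def u_def)
qed

lemma lyapunov_initial_le: "\<exists>C>0. \<forall>e v u :: 'a::real_inner.
  lyapunov e v (kp *\<^sub>R e + kd *\<^sub>R v - u) \<le> C * (norm e + norm v + norm u)\<^sup>2"
proof -
  obtain C where "0 < C" and upper: "\<And>e v r :: 'a.
      lyapunov e v r \<le> C * ((norm e)\<^sup>2 + (norm v)\<^sup>2 + (norm r)\<^sup>2)"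
    using lyapunov_le by blast
  define k where "k = 1 + kp + kd"
  have "lyapunov e v (kp *\<^sub>R e + kd *\<^sub>R v - u) \<le> C * (1 + k\<^sup>2) * (norm e + norm v + norm u)\<^sup>2"
    for e v u :: 'a
  proof -
    define S where "S = norm e + norm v + norm u"
    have "norm (kp *\<^sub>R e + kd *\<^sub>R v - u) \<le> kp * norm e + kd * norm v + norm u"
      using norm_triangle_ineq4[of "kp *\<^sub>R e + kd *\<^sub>R v" u] norm_triangle_ineq[of "kp *\<^sub>R e" "kd *\<^sub>R v"]
        kp_pos kd_pos by simp
    also have "\<dots> \<le> k * S"
      unfolding k_def S_def using kp_pos kd_pos by (simp add: algebra_simps)
    finally have "(norm (kp *\<^sub>R e + kd *\<^sub>R v - u))\<^sup>2 \<le> (k * S)\<^sup>2"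
      by (simp add: power_mono)
    moreover have "(norm e)\<^sup>2 + (norm v)\<^sup>2 \<le> S\<^sup>2"
      unfolding S_def by (simp add: power2_eq_square algebra_simps)
    ultimately have "(norm e)\<^sup>2 + (norm v)\<^sup>2 + (norm (kp *\<^sub>R e + kd *\<^sub>R v - u))\<^sup>2 \<le> (1 + k\<^sup>2) * S\<^sup>2"
      by (simp add: algebra_simps power_mult_distrib)
    then have "C * ((norm e)\<^sup>2 + (norm v)\<^sup>2 + (norm (kp *\<^sub>R e + kd *\<^sub>R v - u))\<^sup>2) \<le> C * ((1 + k\<^sup>2) * S\<^sup>2)"
      using \<open>0 < C\<close> by (simp add: mult_left_mono)
    with upper[of e v "kp *\<^sub>R e + kd *\<^sub>R v - u"] show ?thesis
      unfolding S_def by (simp add: mult.assoc)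
  qed
  moreover have "0 < C * (1 + k\<^sup>2)"
    using \<open>0 < C\<close> by (simp add: add_pos_nonneg)
  ultimately show ?thesis
    by blast
qed

lemma closed_loop_exponential_stability: "\<exists>M>0. \<exists>lam>0.
  \<forall>(f :: real^'n \<Rightarrow> real^'n \<Rightarrow> real^'n \<Rightarrow> real^'n) y ustar T x1 x2 t.
    monotone_lipschitz b L1 L2 f \<longrightarrow> f y 0 ustar = 0 \<longrightarrow>
    closed_loop_solution f kp ki kd y T x1 x2 \<longrightarrow> t \<in> {0..<T} \<longrightarrow>
    norm (y - x1 t) + norm (- x2 t)
      \<le> M * exp (- lam * t) * (norm (y - x1 0) + norm (- x2 0) + norm ustar)"
proof -
  obtain \<gamma> where "0 < \<gamma>" and decay: "\<And>e v r k h :: real^'n. b * (r \<bullet> r) \<le> r \<bullet> k \<Longrightarrow>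
      norm h \<le> L1 * norm e + L2 * norm v \<Longrightarrow> lyapunov_deriv e v r (k + h) \<le> - \<gamma> * lyapunov e v r"
    using lyapunov_decay_rate by blast
  obtain c where "0 < c" and lower: "\<And>e v r :: real^'n. c * (norm e + norm v)\<^sup>2 \<le> lyapunov e v r"
    using lyapunov_ge by blast
  obtain C where "0 < C" and initial: "\<And>e v u :: real^'n.
      lyapunov e v (kp *\<^sub>R e + kd *\<^sub>R v - u) \<le> C * (norm e + norm v + norm u)\<^sup>2"
    using lyapunov_initial_le by blast
  have bound: "norm (y - x1 t) + norm (- x2 t)
      \<le> sqrt (C / c) * exp (- (\<gamma> / 2) * t) * (norm (y - x1 0) + norm (- x2 0) + norm ustar)"
    if "monotone_lipschitz b L1 L2 f" "f y 0 ustar = 0" "closed_loop_solution f kp ki kd y T x1 x2"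
      "t \<in> {0..<T}"
    for f :: "real^'n \<Rightarrow> real^'n \<Rightarrow> real^'n \<Rightarrow> real^'n" and y ustar T x1 x2 t
  proof (rule le_sqrt_mult_exp_if_square_le)
    have "pid_input kp ki kd y x1 x2 0 - ustar = kp *\<^sub>R (y - x1 0) + kd *\<^sub>R (- x2 0) - ustar"
      by (simp add: pid_input_def)
    then have initial_value: "lyapunov (y - x1 0) (- x2 0) (pid_input kp ki kd y x1 x2 0 - ustar)
        \<le> C * (norm (y - x1 0) + norm (- x2 0) + norm ustar)\<^sup>2"
      using initial[of "y - x1 0" "- x2 0" ustar] by simp
    have "c * (norm (y - x1 t) + norm (- x2 t))\<^sup>2
        \<le> lyapunov (y - x1 t) (- x2 t) (pid_input kp ki kd y x1 x2 t - ustar)"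
      by (rule lower)
    also have "\<dots> \<le> lyapunov (y - x1 0) (- x2 0) (pid_input kp ki kd y x1 x2 0 - ustar) * exp (- \<gamma> * t)"
      using closed_loop_lyapunov_decay[OF that(1,2) decay that(3)] that(4) by simp
    also have "\<dots> \<le> C * (norm (y - x1 0) + norm (- x2 0) + norm ustar)\<^sup>2 * exp (- \<gamma> * t)"
      by (rule mult_right_mono[OF initial_value]) simp
    finally show "c * (norm (y - x1 t) + norm (- x2 t))\<^sup>2
        \<le> C * (norm (y - x1 0) + norm (- x2 0) + norm ustar)\<^sup>2 * exp (- \<gamma> * t)" .
  qed (use \<open>0 < c\<close> \<open>0 < C\<close> in auto)
  show ?thesis
    using \<open>0 < \<gamma>\<close> \<open>0 < c\<close> \<open>0 < C\<close> bound
    by (intro exI[of _ "sqrt (C / c)"] conjI exI[of _ "\<gamma> / 2"]) auto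
qed

end

theorem theorem3p1:
  fixes L1 L2 b kp ki kd :: real
  assumes "L1 > 0" and "L2 > 0" and "b > 0"
    and "(kp, ki, kd) \<in> Omega_pid L1 L2 b"
  shows "\<exists>M > 0. \<exists>lam > 0.
     \<forall>f \<in> (F_class L1 L2 b :: (real^'n \<Rightarrow> real^'n \<Rightarrow> real^'n \<Rightarrow> real^'n) set).
     \<forall>y :: real^'n. \<exists>ustar.
        f y 0 ustar = 0 \<and> (\<forall>v. f y 0 v = 0 \<longrightarrow> v = ustar) \<and>
        (\<forall>T x1 x2. closed_loop_solution f kp ki kd y T x1 x2 \<longrightarrow>
           (\<forall>t\<in>{0..<T}. norm (y - x1 t) + norm (- x2 t)
              \<le> M * exp (- lam * t) * (norm (y - x1 0) + norm (- x2 0) + norm ustar)))"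
proof -
  interpret pid_gains L1 L2 b kp ki kd
    using assms unfolding Omega_pid_def Let_def by unfold_locales auto
  obtain M lam where "0 < M" "0 < lam" and bound:
    "\<forall>(f :: real^'n \<Rightarrow> real^'n \<Rightarrow> real^'n \<Rightarrow> real^'n) y ustar T x1 x2 t.
      monotone_lipschitz b L1 L2 f \<longrightarrow> f y 0 ustar = 0 \<longrightarrow>
      closed_loop_solution f kp ki kd y T x1 x2 \<longrightarrow> t \<in> {0..<T} \<longrightarrow>
      norm (y - x1 t) + norm (- x2 t)
        \<le> M * exp (- lam * t) * (norm (y - x1 0) + norm (- x2 0) + norm ustar)"
    using closed_loop_exponential_stability by blast
  show ?thesis
  proof (rule exI[of _ M], rule conjI[OF \<open>0 < M\<close>], rule exI[of _ lam], rule conjI[OF \<open>0 < lam\<close>],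
      intro ballI allI, goal_cases)
    case (1 f y)
    then obtain ustar where "f y 0 ustar = 0" "\<forall>v. f y 0 v = 0 \<longrightarrow> v = ustar"
      using F_class_unique_zero[OF _ b_pos] by blast
    then show ?case
      using bound F_class_monotone_lipschitz[OF 1] by blast
  qed
qed

end
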